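(* Let $X=\{x\in\mathbb{R}^n: Cx\le d\}$ be a polyhedral set ($C\in\mathbb{R}^{p\times n}$, $d\in\mathbb{R}^p$), let $g:\mathbb{R}^m\to\mathbb{R}$ be $\sigma_g$-strongly convex with $L_g$-Lipschitz continuous gradient, let $A\in\mathbb{R}^{m\times n}$ be nonzero, and set $f(x)=g(Ax)$. Assume the optimal set $X^*$ of $\min_{x\in X}f(x)$ is nonempty. Then there is a unique $t^*\in\mathbb{R}^m$ with $Ax^*=t^*$ for all $x^*\in X^*$, so that $X^*=\{x: Ax=t^*,\ Cx\le d\}$; let $\theta>0$ be a Hoffman constant for this polyhedron, i.e. $$\|x-[x]_{X^*}\|\le\theta\left\|\begin{pmatrix}Ax-t^*\\ [Cx-d]_+\end{pmatrix}\right\|\qquad\forall x\in\mathbb{R}^n .$$ Then $\nabla f$ is Lipschitz continuous with constant $L_f=L_g\|A\|^2$, and $f$ is quasi-strongly convex on $X$ with constant $\kappa_f=\sigma_g/\theta^2$, i.e. $$f^*\ge f(x)+\langle\nabla f(x),\bar x-x\rangle+\frac{\sigma_g}{2\theta^2}\|x-\bar x\|^2\qquad\forall x\in X,\ \bar x=[x]_{X^*}.$$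
   Context: $\|\cdot\|$ denotes the Euclidean norm (spectral norm for matrices), $[u]_S$ the Euclidean projection onto a closed convex set $S$, and $[v]_+$ the componentwise positive part. $g$ is $\sigma_g$-strongly convex means $g(z)\ge g(w)+\langle\nabla g(w),z-w\rangle+\frac{\sigma_g}{2}\|z-w\|^2$ for all $z,w$, with $\sigma_g>0$. $f^*=\min_{x\in X}f(x)$. *)

theory Defs
  imports "HOL-Analysis.Analysis"
begin

definition polyhedron :: "real^'n^'p \<Rightarrow> real^'p \<Rightarrow> (real^'n) set" where
  "polyhedron C d = {x. \<forall>i. (C *v x) $ i \<le> d $ i}"

definition argmin_set :: "('a \<Rightarrow> real) \<Rightarrow> 'a set \<Rightarrow> 'a set" where
  "argmin_set f X = {x \<in> X. \<forall>y\<in>X. f x \<le> f y}"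

definition pos_part_vec :: "real^'p \<Rightarrow> real^'p" where
  "pos_part_vec v = (\<chi> i. max 0 (v $ i))"

definition stack_norm :: "real^'m \<Rightarrow> real^'p \<Rightarrow> real" where
  "stack_norm u v = sqrt ((norm u)\<^sup>2 + (norm v)\<^sup>2)"

end

theory Submission
  imports Defs
begin

text \<open>Strong convexity of \<open>g\<close> makes \<open>g\<close> strictly convex, so all minimisers of \<open>g \<circ> A\<close> over a
  convex set share the same image \<open>t\<^sup>*\<close> under \<open>A\<close>; the optimal set is then the polyhedron
  \<open>{x. A x = t\<^sup>*, C x \<le> d}\<close>. For \<open>x \<in> X\<close> the Hoffman bound reduces to
  \<open>\<parallel>x - x\<^sub>b\<parallel> \<le> \<theta> \<parallel>A x - t\<^sup>*\<parallel>\<close>, and strong convexity of \<open>g\<close> between \<open>A x\<close> and \<open>A x\<^sub>b = t\<^sup>*\<close> then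
  gives the quadratic growth term \<open>\<sigma>\<^sub>g/2 \<parallel>A x - t\<^sup>*\<parallel>\<^sup>2 \<ge> \<sigma>\<^sub>g/(2\<theta>\<^sup>2) \<parallel>x - x\<^sub>b\<parallel>\<^sup>2\<close>.\<close>

lemma norm_vector_matrix_le_onorm:
  fixes A :: "real^'n^'m" and v :: "real^'m"
  shows "norm (v v* A) \<le> onorm (\<lambda>h. A *v h) * norm v"
proof -
  let ?w = "v v* A"
  let ?K = "onorm (\<lambda>h. A *v h)"
  have "(norm ?w)\<^sup>2 = v \<bullet> (A *v ?w)"
    by (simp add: power2_norm_eq_inner dot_lmul_matrix)
  also have "\<dots> \<le> norm v * norm (A *v ?w)"
    by (rule Cauchy_Schwarz_ineq2[THEN order_trans[OF abs_ge_self]])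
  also have "\<dots> \<le> norm v * (?K * norm ?w)"
    by (rule mult_left_mono[OF onorm]) auto
  finally have "norm ?w * norm ?w \<le> (?K * norm v) * norm ?w"
    by (simp add: power2_eq_square algebra_simps)
  moreover have "?K \<ge> 0" by (rule onorm_pos_le) simp
  ultimately show ?thesis
    by (cases "norm ?w = 0") (auto simp: mult_le_cancel_right)
qed

lemma strongly_convex_midpoint:
  fixes g :: "'a::real_inner \<Rightarrow> real"
  assumes strong: "\<And>z w. g z \<ge> g w + G w \<bullet> (z - w) + \<sigma> / 2 * (norm (z - w))\<^sup>2"
  shows "g ((1/2) *\<^sub>R z + (1/2) *\<^sub>R w) \<le> (g z + g w) / 2 - \<sigma> / 8 * (norm (z - w))\<^sup>2"
proof -
  let ?m = "(1/2) *\<^sub>R z + (1/2) *\<^sub>R w"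
  have z_m: "z - ?m = (1/2) *\<^sub>R (z - w)" and w_m: "w - ?m = - ((1/2) *\<^sub>R (z - w))"
    by (simp_all add: scaleR_diff_right algebra_simps flip: scaleR_add_left)
  have half: "(norm ((1/2) *\<^sub>R (z - w)))\<^sup>2 = (norm (z - w))\<^sup>2 / 4"
    by (simp add: power2_eq_square)
  show ?thesis
    using strong[of ?m z] strong[of ?m w]
    unfolding z_m w_m norm_minus_cancel half inner_minus_right by (simp add: field_simps)
qed

lemma polyhedron_eq_INT: "polyhedron C d = (\<Inter>i. {x. (C *v x) $ i \<le> d $ i})"
  by (auto simp: polyhedron_def)

lemma convex_polyhedron: "convex (polyhedron C d)"
proof -
  have "convex {x. (C *v x) $ i \<le> d $ i}" for i
    using convex_halfspace_le[of "row i C" "d $ i"]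
    by (simp add: matrix_vector_mult_def row_def inner_vec_def vec_lambda_beta mult.commute)
  then show ?thesis
    unfolding polyhedron_eq_INT by (simp add: convex_INT)
qed

lemma closed_polyhedron: "closed (polyhedron C d)"
  unfolding polyhedron_eq_INT by (intro closed_INT ballI closed_Collect_le continuous_intros)

lemma stack_norm_pos_part_polyhedron:
  assumes "x \<in> polyhedron C d"
  shows "stack_norm u (pos_part_vec (C *v x - d)) = norm u"
proof -
  have "pos_part_vec (C *v x - d) = 0"
    using assms by (simp add: pos_part_vec_def polyhedron_def vec_eq_iff)
  then show ?thesis by (simp add: stack_norm_def)
qed

lemma argmin_set_linear_image_unique:
  fixes L :: "'a::real_vector \<Rightarrow> 'b::real_inner"
  assumes "linear L" "convex X" "\<sigma> > 0"
    and strong: "\<And>z w. g z \<ge> g w + G w \<bullet> (z - w) + \<sigma> / 2 * (norm (z - w))\<^sup>2"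
    and x: "x \<in> argmin_set (\<lambda>x. g (L x)) X" and y: "y \<in> argmin_set (\<lambda>x. g (L x)) X"
  shows "L x = L y"
proof (rule ccontr)
  assume ne: "L x \<noteq> L y"
  let ?m = "(1/2) *\<^sub>R x + (1/2) *\<^sub>R y"
  have "?m \<in> X"
    using x y \<open>convex X\<close> by (auto simp: argmin_set_def intro: convexD)
  then have "g (L x) \<le> g (L ?m)" "g (L y) \<le> g (L ?m)"
    using x y by (auto simp: argmin_set_def)
  moreover have "L ?m = (1/2) *\<^sub>R L x + (1/2) *\<^sub>R L y"
    using \<open>linear L\<close> by (simp add: linear_add linear_scale)
  then have "g (L ?m) \<le> (g (L x) + g (L y)) / 2 - \<sigma> / 8 * (norm (L x - L y))\<^sup>2"
    using strongly_convex_midpoint[OF strong] by simp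
  moreover have "\<sigma> / 8 * (norm (L x - L y))\<^sup>2 > 0"
    using ne \<open>\<sigma> > 0\<close> by simp
  ultimately show False by (auto simp: field_simps)
qed

lemma ex1_argmin_set_linear_image:
  fixes L :: "'a::real_vector \<Rightarrow> 'b::real_inner"
  assumes "linear L" "convex X" "\<sigma> > 0"
    and strong: "\<And>z w. g z \<ge> g w + G w \<bullet> (z - w) + \<sigma> / 2 * (norm (z - w))\<^sup>2"
    and "argmin_set (\<lambda>x. g (L x)) X \<noteq> {}"
  shows "\<exists>!t. \<forall>x\<in>argmin_set (\<lambda>x. g (L x)) X. L x = t"
proof -
  obtain x0 where x0: "x0 \<in> argmin_set (\<lambda>x. g (L x)) X"
    using assms(5) by blast
  show ?thesis
  proof (rule ex1I)
    show "\<forall>x\<in>argmin_set (\<lambda>x. g (L x)) X. L x = L x0"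
      using argmin_set_linear_image_unique[OF assms(1-3) strong _ x0] by blast
    show "t = L x0" if "\<forall>x\<in>argmin_set (\<lambda>x. g (L x)) X. L x = t" for t
      using bspec[OF that x0] by simp
  qed
qed

lemma argmin_set_eq_fiber:
  assumes "argmin_set (\<lambda>x. g (L x)) X \<noteq> {}"
    and image: "\<forall>x\<in>argmin_set (\<lambda>x. g (L x)) X. L x = t"
  shows "argmin_set (\<lambda>x. g (L x)) X = {x \<in> X. L x = t}"
proof (intro set_eqI iffI)
  fix x
  assume x: "x \<in> argmin_set (\<lambda>x. g (L x)) X"
  then have "x \<in> X"
    by (simp add: argmin_set_def)
  with image x show "x \<in> {x \<in> X. L x = t}"
    by blast
next
  fix x
  assume "x \<in> {x \<in> X. L x = t}"
  moreover obtain x0 where x0: "x0 \<in> argmin_set (\<lambda>x. g (L x)) X"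
    using assms(1) by blast
  moreover have "L x0 = t"
    using x0 image by blast
  ultimately show "x \<in> argmin_set (\<lambda>x. g (L x)) X"
    by (simp add: argmin_set_def)
qed

lemma closed_argmin_set:
  assumes "closed X" "continuous_on UNIV f"
  shows "closed (argmin_set f X)"
proof -
  have "argmin_set f X = X \<inter> (\<Inter>y\<in>X. {x. f x \<le> f y})"
    by (auto simp: argmin_set_def)
  moreover have "closed {x. f x \<le> f y}" for y
    using assms(2) by (intro closed_Collect_le continuous_on_const) auto
  ultimately show ?thesis
    using \<open>closed X\<close> by (simp add: closed_Int closed_INT)
qed

lemma Inf_image_eq_argmin:
  fixes f :: "'a \<Rightarrow> real"
  assumes "x \<in> argmin_set f X"
  shows "Inf (f ` X) = f x"
  using assms unfolding argmin_set_def by (intro cInf_eq_minimum) auto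

lemma has_derivative_comp_matrix:
  fixes A :: "real^'n^'m"
  assumes "(g has_derivative (\<lambda>h. G (A *v x) \<bullet> h)) (at (A *v x))"
  shows "((\<lambda>x. g (A *v x)) has_derivative (\<lambda>h. (G (A *v x) v* A) \<bullet> h)) (at x)"
  using has_derivative_compose[OF bounded_linear_imp_has_derivative[OF
        matrix_vector_mul_bounded_linear[of A]] assms]
  by (simp add: o_def dot_lmul_matrix)

lemma lipschitz_const_nonneg:
  fixes G :: "'a::real_normed_vector \<Rightarrow> 'b::real_normed_vector"
  assumes "\<And>z w. norm (G z - G w) \<le> L * norm (z - w)" and "(a::'a) \<noteq> 0"
  shows "L \<ge> 0"
proof -
  have "0 \<le> L * norm a"
    using order_trans[OF norm_ge_zero assms(1)[of a 0]] by simp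
  then show ?thesis
    using \<open>a \<noteq> 0\<close> by (simp add: zero_le_mult_iff)
qed

lemma lipschitz_gradient_comp_matrix:
  fixes A :: "real^'n^'m"
  assumes lip: "\<And>z w. norm (G z - G w) \<le> Lg * norm (z - w)" and "Lg \<ge> 0"
  shows "norm (G (A *v x) v* A - G (A *v y) v* A) \<le> Lg * (onorm (\<lambda>v. A *v v))\<^sup>2 * norm (x - y)"
proof -
  let ?K = "onorm (\<lambda>v. A *v v)"
  have "?K \<ge> 0" by (rule onorm_pos_le) simp
  have "norm (G (A *v x) v* A - G (A *v y) v* A) = norm ((G (A *v x) - G (A *v y)) v* A)"
    by (simp add: vector_matrix_mult_diff_distrib)
  also have "\<dots> \<le> ?K * norm (G (A *v x) - G (A *v y))"
    by (rule norm_vector_matrix_le_onorm)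
  also have "\<dots> \<le> ?K * (Lg * norm (A *v (x - y)))"
    using mult_left_mono[OF lip \<open>?K \<ge> 0\<close>] by (simp add: matrix_vector_mult_diff_distrib)
  also have "\<dots> \<le> ?K * (Lg * (?K * norm (x - y)))"
    using onorm[OF matrix_vector_mul_bounded_linear[of A], of "x - y"] \<open>?K \<ge> 0\<close> \<open>Lg \<ge> 0\<close>
    by (simp add: mult_left_mono)
  finally show ?thesis by (simp add: power2_eq_square algebra_simps)
qed

lemma quasi_strong_convexity_of_error_bound:
  fixes A :: "real^'n^'m"
  assumes strong: "\<And>z w. g z \<ge> g w + G w \<bullet> (z - w) + \<sigma> / 2 * (norm (z - w))\<^sup>2"
    and "\<sigma> > 0" "\<theta> > 0" and xb: "xb \<in> argmin_set (\<lambda>x. g (A *v x)) X"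
    and bound: "norm (x - xb) \<le> \<theta> * norm (A *v x - A *v xb)"
  shows "Inf ((\<lambda>x. g (A *v x)) ` X)
    \<ge> g (A *v x) + (G (A *v x) v* A) \<bullet> (xb - x) + \<sigma> / (2 * \<theta>\<^sup>2) * (norm (x - xb))\<^sup>2"
proof -
  have "(norm (x - xb))\<^sup>2 \<le> \<theta>\<^sup>2 * (norm (A *v x - A *v xb))\<^sup>2"
    using power_mono[OF bound norm_ge_zero, of 2] by (simp add: power_mult_distrib)
  then have "\<sigma> / (2 * \<theta>\<^sup>2) * (norm (x - xb))\<^sup>2 \<le> \<sigma> / (2 * \<theta>\<^sup>2) * (\<theta>\<^sup>2 * (norm (A *v x - A *v xb))\<^sup>2)"
    using \<open>\<sigma> > 0\<close> by (intro mult_left_mono) auto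
  also have "\<dots> = \<sigma> / 2 * (norm (A *v xb - A *v x))\<^sup>2"
    using \<open>\<theta> > 0\<close> by (simp add: field_simps norm_minus_commute)
  finally show ?thesis
    using strong[of "A *v x" "A *v xb"] Inf_image_eq_argmin[OF xb]
    by (simp add: dot_lmul_matrix matrix_vector_mult_diff_distrib)
qed

theorem theorem8:
  fixes C :: "real^'n^'p" and d :: "real^'p"
    and A :: "real^'n^'m" and g :: "real^'m \<Rightarrow> real" and G :: "real^'m \<Rightarrow> real^'m"
    and \<sigma>g Lg :: real
  assumes grad_g: "\<And>z. (g has_derivative (\<lambda>h. G z \<bullet> h)) (at z)"
    and sigma_pos: "\<sigma>g > 0"
    and strong: "\<And>z w. g z \<ge> g w + G w \<bullet> (z - w) + \<sigma>g / 2 * (norm (z - w))\<^sup>2"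
    and lip: "\<And>z w. norm (G z - G w) \<le> Lg * norm (z - w)"
    and A_nz: "A \<noteq> 0"
    and nonempty: "argmin_set (\<lambda>x. g (A *v x)) (polyhedron C d) \<noteq> {}"
  shows "(\<exists>!t. \<forall>xs\<in>argmin_set (\<lambda>x. g (A *v x)) (polyhedron C d). A *v xs = t)
    \<and> (\<forall>t. (\<forall>xs\<in>argmin_set (\<lambda>x. g (A *v x)) (polyhedron C d). A *v xs = t) \<longrightarrow>
           argmin_set (\<lambda>x. g (A *v x)) (polyhedron C d) = {x. A *v x = t \<and> (\<forall>i. (C *v x) $ i \<le> d $ i)})
    \<and> (\<exists>Gf. (\<forall>x. ((\<lambda>x. g (A *v x)) has_derivative (\<lambda>h. Gf x \<bullet> h)) (at x))
           \<and> (\<forall>x y. norm (Gf x - Gf y) \<le> Lg * (onorm (\<lambda>v. A *v v))\<^sup>2 * norm (x - y))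
           \<and> (\<forall>t \<theta>. (\<forall>xs\<in>argmin_set (\<lambda>x. g (A *v x)) (polyhedron C d). A *v xs = t) \<longrightarrow> \<theta> > 0 \<longrightarrow>
                (\<forall>x. norm (x - closest_point (argmin_set (\<lambda>x. g (A *v x)) (polyhedron C d)) x)
                      \<le> \<theta> * stack_norm (A *v x - t) (pos_part_vec (C *v x - d))) \<longrightarrow>
                (\<forall>x\<in>polyhedron C d.
                   let xb = closest_point (argmin_set (\<lambda>x. g (A *v x)) (polyhedron C d)) x in
                   Inf ((\<lambda>x. g (A *v x)) ` polyhedron C d)
                     \<ge> g (A *v x) + Gf x \<bullet> (xb - x) + \<sigma>g / (2 * \<theta>\<^sup>2) * (norm (x - xb))\<^sup>2)))"
  (is "?unique \<and> ?fiber \<and> ?grad")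
proof -
  let ?X = "polyhedron C d"
  let ?S = "argmin_set (\<lambda>x. g (A *v x)) ?X"
  define Gf where "Gf x = G (A *v x) v* A" for x
  have deriv: "((\<lambda>x. g (A *v x)) has_derivative (\<lambda>h. Gf x \<bullet> h)) (at x)" for x
    unfolding Gf_def by (rule has_derivative_comp_matrix) (rule grad_g)
  have "closed ?S"
    using deriv by (intro closed_argmin_set closed_polyhedron has_derivative_continuous_on) blast
  have "Lg \<ge> 0"
    using lipschitz_const_nonneg[OF lip, of 1] by (simp add: vec_eq_iff)
  have ?unique
    by (rule ex1_argmin_set_linear_image[OF _ convex_polyhedron sigma_pos strong nonempty]) simp
  moreover have ?fiber
    using argmin_set_eq_fiber[where g = g and L = "\<lambda>x. A *v x", OF nonempty]
    by (simp add: polyhedron_def conj_commute)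
  moreover have ?grad
  proof (intro exI conjI allI impI ballI)
    show "((\<lambda>x. g (A *v x)) has_derivative (\<lambda>h. Gf x \<bullet> h)) (at x)" for x
      by (rule deriv)
    show "norm (Gf x - Gf y) \<le> Lg * (onorm (\<lambda>v. A *v v))\<^sup>2 * norm (x - y)" for x y
      unfolding Gf_def by (rule lipschitz_gradient_comp_matrix[OF lip \<open>Lg \<ge> 0\<close>])
    show "let xb = closest_point ?S x in Inf ((\<lambda>x. g (A *v x)) ` ?X)
        \<ge> g (A *v x) + Gf x \<bullet> (xb - x) + \<sigma>g / (2 * \<theta>\<^sup>2) * (norm (x - xb))\<^sup>2"
      if image: "\<forall>x\<in>?S. A *v x = t" and "\<theta> > 0"
        and hoffman: "\<forall>x. norm (x - closest_point ?S x) \<le> \<theta> * stack_norm (A *v x - t) (pos_part_vec (C *v x - d))"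
        and "x \<in> ?X" for t \<theta> x
    proof -
      let ?xb = "closest_point ?S x"
      have xb: "?xb \<in> ?S"
        using closest_point_in_set[OF \<open>closed ?S\<close> nonempty] .
      have "norm (x - ?xb) \<le> \<theta> * norm (A *v x - t)"
        using hoffman[rule_format, of x] unfolding stack_norm_pos_part_polyhedron[OF \<open>x \<in> ?X\<close>] .
      moreover have "A *v ?xb = t"
        using image xb by blast
      ultimately show ?thesis
        using quasi_strong_convexity_of_error_bound[OF strong sigma_pos \<open>\<theta> > 0\<close> xb]
        by (simp add: Gf_def Let_def)
    qed
  qed
  ultimately show ?thesis by (intro conjI)
qed

end
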